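(* Let $\mathcal H_A,\mathcal H_B$ be finite-dimensional Hilbert spaces and let $\mathsf{Chan}(X)$ denote the set of quantum channels (linear, completely positive, trace-preserving maps) on $\mathsf{Lin}(\mathcal H_X)$. Within $\mathsf{Chan}(\mathcal H_A\otimes\mathcal H_B)$, a channel $\mathcal C$ commutes with every channel of the form $\mathcal A\otimes\mathcal I_B$, $\mathcal A\in\mathsf{Chan}(A)$, if and only if $\mathcal C=\mathcal I_A\otimes\mathcal B$ for some $\mathcal B\in\mathsf{Chan}(B)$. That is, $\{\mathcal A\otimes\mathcal I_B:\mathcal A\in\mathsf{Chan}(A)\}'=\{\mathcal I_A\otimes\mathcal B:\mathcal B\in\mathsf{Chan}(B)\}$.
   Context: $\mathcal I_A,\mathcal I_B$ denote identity maps on $\mathsf{Lin}(\mathcal H_A)$, $\mathsf{Lin}(\mathcal H_B)$. The commutant $M'$ of a set $M$ of channels is the set of all channels in $\mathsf{Chan}(\mathcal H_A\otimes\mathcal H_B)$ commuting (under composition) with every element of $M$. *)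

theory Defs
  imports Complex_Main
begin

text \<open>Finite-dimensional Hilbert space H_X is modelled as complex functions on a finite
  basis type 'a; Lin(H_X) as matrices indexed by 'a (entry M i j).
  H_A \<otimes> H_B has basis 'a \<times> 'b.\<close>

type_synonym 'a sqmat = "'a \<Rightarrow> 'a \<Rightarrow> complex"

definition lin_map :: "('a sqmat \<Rightarrow> 'b sqmat) \<Rightarrow> bool" where
  "lin_map \<Phi> \<longleftrightarrow>
     (\<forall>X Y. \<Phi> (\<lambda>i j. X i j + Y i j) = (\<lambda>i j. \<Phi> X i j + \<Phi> Y i j)) \<and>
     (\<forall>c X. \<Phi> (\<lambda>i j. c * X i j) = (\<lambda>i j. c * \<Phi> X i j))"

text \<open>Positive semidefinite block matrix with k x k blocks (blocks indexed by p, q < k),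
  each block in Lin(H_X): the matrix of an operator on C^k \<otimes> H_X.\<close>
definition psd_block :: "nat \<Rightarrow> (nat \<Rightarrow> nat \<Rightarrow> ('a::finite) sqmat) \<Rightarrow> bool" where
  "psd_block k X \<longleftrightarrow>
     (\<forall>v :: nat \<Rightarrow> 'a \<Rightarrow> complex.
        (let s = (\<Sum>p<k. \<Sum>q<k. \<Sum>i\<in>UNIV. \<Sum>j\<in>UNIV. cnj (v p i) * X p q i j * v q j)
         in Im s = 0 \<and> Re s \<ge> 0))"

text \<open>Complete positivity: id_k \<otimes> \<Phi> is positive for every ancilla dimension k.\<close>
definition completely_positive :: "(('a::finite) sqmat \<Rightarrow> ('b::finite) sqmat) \<Rightarrow> bool" where
  "completely_positive \<Phi> \<longleftrightarrow>
     (\<forall>k X. psd_block k X \<longrightarrow> psd_block k (\<lambda>p q. \<Phi> (X p q)))"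

definition mtrace :: "('a::finite) sqmat \<Rightarrow> complex" where
  "mtrace X = (\<Sum>i\<in>UNIV. X i i)"

definition trace_preserving :: "(('a::finite) sqmat \<Rightarrow> ('b::finite) sqmat) \<Rightarrow> bool" where
  "trace_preserving \<Phi> \<longleftrightarrow> (\<forall>X. mtrace (\<Phi> X) = mtrace X)"

definition channel :: "(('a::finite) sqmat \<Rightarrow> 'a sqmat) \<Rightarrow> bool" where
  "channel \<Phi> \<longleftrightarrow> lin_map \<Phi> \<and> completely_positive \<Phi> \<and> trace_preserving \<Phi>"

definition unit_mat :: "'a \<Rightarrow> 'a \<Rightarrow> 'a sqmat" where
  "unit_mat i j = (\<lambda>r s. if r = i \<and> s = j then 1 else 0)"

definition kron :: "'a sqmat \<Rightarrow> 'b sqmat \<Rightarrow> ('a \<times> 'b) sqmat" where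
  "kron M N = (\<lambda>(i, k) (j, l). M i j * N k l)"

text \<open>Tensor product of maps, the linear extension of E_ij \<otimes> E_kl \<mapsto> A(E_ij) \<otimes> B(E_kl).\<close>
definition tensor_map :: "(('a::finite) sqmat \<Rightarrow> 'a sqmat) \<Rightarrow> (('b::finite) sqmat \<Rightarrow> 'b sqmat)
    \<Rightarrow> ('a \<times> 'b) sqmat \<Rightarrow> ('a \<times> 'b) sqmat" where
  "tensor_map A B X = (\<lambda>r s. \<Sum>i\<in>UNIV. \<Sum>j\<in>UNIV. \<Sum>k\<in>UNIV. \<Sum>l\<in>UNIV.
       X (i, k) (j, l) * kron (A (unit_mat i j)) (B (unit_mat k l)) r s)"

definition commutant :: "((('c::finite) sqmat \<Rightarrow> 'c sqmat) set) \<Rightarrow> ('c sqmat \<Rightarrow> 'c sqmat) set" where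
  "commutant M = {C. channel C \<and> (\<forall>X\<in>M. C \<circ> X = X \<circ> C)}"

end

theory Submission
  imports Defs "HOL-Library.Complex_Order"
begin

text \<open>
  A channel \<open>C\<close> commuting with every \<open>\<A> \<otimes> \<I>\<^sub>B\<close> commutes in particular with the
  replacement channels \<open>X \<mapsto> tr(X) \<rho>\<close> tensored with \<open>\<I>\<^sub>B\<close>, for every pure state \<open>\<rho>\<close>.
  Applied to \<open>E\<^sub>a\<^sub>a \<otimes> Y\<close> this gives \<open>C(\<rho> \<otimes> Y) = \<rho> \<otimes> \<B>(Y)\<close>, where
  \<open>\<B>(Y) = tr\<^sub>A C(E\<^sub>a\<^sub>a \<otimes> Y)\<close>. Every matrix unit \<open>E\<^sub>i\<^sub>j\<close> is a complex combination of pure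
  states, so by linearity \<open>C = \<I>\<^sub>A \<otimes> \<B>\<close>, and \<open>\<B>\<close> inherits complete positivity and
  trace preservation from \<open>C\<close> by restriction to the corner \<open>E\<^sub>a\<^sub>a \<otimes> Lin(\<H>\<^sub>B)\<close>.
  The converse inclusion is the commutation of \<open>\<A> \<otimes> \<I>\<^sub>B\<close> with \<open>\<I>\<^sub>A \<otimes> \<B>\<close>.
\<close>

lemma if_conj_zero: "(if P \<and> Q then a else (0::'c::zero)) = (if P then if Q then a else 0 else 0)"
  by simp

lemma mult_if_zero: "(x::'c::mult_zero) * (if P then y else 0) = (if P then x * y else 0)"
  by simp

lemma if_zero_mult: "(if P then y else 0) * (x::'c::mult_zero) = (if P then y * x else 0)"
  by simp

lemma sum_if_zero: "(\<Sum>x\<in>S. if P then f x else (0::'c::comm_monoid_add)) = (if P then sum f S else 0)"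
  by simp

lemma cnj_if_zero: "cnj (if P then a else 0) = (if P then cnj a else 0)"
  by simp

lemmas delta_simps = if_conj_zero mult_if_zero if_zero_mult sum_if_zero cnj_if_zero

lemma sum_UNIV_prod:
  "(\<Sum>x\<in>(UNIV::(('a::finite) \<times> ('b::finite)) set). f x) = (\<Sum>i\<in>UNIV. \<Sum>k\<in>UNIV. f (i, k))"
  by (subst UNIV_Times_UNIV[symmetric]) (simp add: sum.cartesian_product)

lemma sum_swap_pairs:
  "(\<Sum>a\<in>A. \<Sum>b\<in>B. \<Sum>c\<in>C. \<Sum>d\<in>D. f a b c d) = (\<Sum>c\<in>C. \<Sum>d\<in>D. \<Sum>a\<in>A. \<Sum>b\<in>B. f a b c d)"
proof -
  have "(\<Sum>a\<in>A. \<Sum>b\<in>B. \<Sum>c\<in>C. \<Sum>d\<in>D. f a b c d) = (\<Sum>a\<in>A. \<Sum>c\<in>C. \<Sum>d\<in>D. \<Sum>b\<in>B. f a b c d)"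
    by (intro sum.cong refl) (subst sum.swap, intro sum.cong refl, rule sum.swap)
  also have "\<dots> = (\<Sum>c\<in>C. \<Sum>d\<in>D. \<Sum>a\<in>A. \<Sum>b\<in>B. f a b c d)"
    by (subst sum.swap, intro sum.cong refl, rule sum.swap)
  finally show ?thesis .
qed

lemma lin_map_scale: "lin_map A \<Longrightarrow> A (\<lambda>i j. c * X i j) = (\<lambda>i j. c * A X i j)"
  unfolding lin_map_def by blast

lemma lin_map_add: "lin_map A \<Longrightarrow> A (\<lambda>i j. X i j + Y i j) = (\<lambda>i j. A X i j + A Y i j)"
  unfolding lin_map_def by blast

lemma lin_map_zero: "lin_map A \<Longrightarrow> A (\<lambda>i j. 0) = (\<lambda>i j. 0)"
  using lin_map_scale[of A 0 "\<lambda>i j. 0"] by simp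

lemma lin_map_sum:
  assumes "lin_map A" "finite S"
  shows "A (\<lambda>i j. \<Sum>x\<in>S. f x i j) = (\<lambda>i j. \<Sum>x\<in>S. A (f x) i j)"
  using assms(2)
proof (induction S rule: finite_induct)
  case empty
  then show ?case using lin_map_zero[OF assms(1)] by simp
next
  case (insert x F)
  then show ?case
    using lin_map_add[OF assms(1), of "f x" "\<lambda>i j. \<Sum>x\<in>F. f x i j"] by simp
qed

lemma mat_eq_sum_unit_mat:
  "(M :: ('a::finite) sqmat) = (\<lambda>i j. \<Sum>i'\<in>UNIV. \<Sum>j'\<in>UNIV. M i' j' * unit_mat i' j' i j)"
  by (intro ext) (simp add: unit_mat_def delta_simps)

lemma lin_map_unit_mat_expansion:
  assumes "lin_map A"
  shows "A M i j = (\<Sum>i'\<in>UNIV. \<Sum>j'\<in>(UNIV::('a::finite) set). M i' j' * A (unit_mat i' j') i j)"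
proof -
  have "A M = A (\<lambda>i j. \<Sum>i'\<in>UNIV. \<Sum>j'\<in>UNIV. M i' j' * unit_mat i' j' i j)"
    by (subst mat_eq_sum_unit_mat, rule refl)
  also have "\<dots> = (\<lambda>i j. \<Sum>i'\<in>UNIV. \<Sum>j'\<in>UNIV. A (\<lambda>i j. M i' j' * unit_mat i' j' i j) i j)"
    by (simp add: lin_map_sum[OF assms])
  also have "\<dots> = (\<lambda>i j. \<Sum>i'\<in>UNIV. \<Sum>j'\<in>UNIV. M i' j' * A (unit_mat i' j') i j)"
    by (simp add: lin_map_scale[OF assms, of "M _ _" "unit_mat _ _", simplified])
  finally show ?thesis by simp
qed

lemma tensor_map_id_left_apply:
  assumes "lin_map B"
  shows "tensor_map id B X (i, k) (j, l) = B (\<lambda>k' l'. X (i, k') (j, l')) k l"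
  by (simp add: tensor_map_def kron_def unit_mat_def delta_simps
      lin_map_unit_mat_expansion[OF assms, of "\<lambda>k' l'. X (i, k') (j, l')"])

lemma tensor_map_id_right_apply:
  assumes "lin_map A"
  shows "tensor_map A id X (i, k) (j, l) = A (\<lambda>i' j'. X (i', k) (j', l)) i j"
  by (simp add: tensor_map_def kron_def unit_mat_def delta_simps
      lin_map_unit_mat_expansion[OF assms, of "\<lambda>i' j'. X (i', k) (j', l)"])

lemma tensor_map_id_left:
  assumes "lin_map B"
  shows "tensor_map id B X = (\<lambda>r s. B (\<lambda>k' l'. X (fst r, k') (fst s, l')) (snd r) (snd s))"
  by (intro ext) (simp add: tensor_map_id_left_apply[OF assms, symmetric])

lemma tensor_map_id_right:
  assumes "lin_map A"
  shows "tensor_map A id X = (\<lambda>r s. A (\<lambda>i' j'. X (i', snd r) (j', snd s)) (fst r) (fst s))"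
  by (intro ext) (simp add: tensor_map_id_right_apply[OF assms, symmetric])

lemma tensor_map_id_right_commute:
  assumes "lin_map A" "lin_map B"
  shows "tensor_map A id (tensor_map id B X) = tensor_map id B (tensor_map A id X)"
proof (intro ext)
  fix r s :: "'a::finite \<times> 'b::finite"
  obtain i k j l where rs: "r = (i, k)" "s = (j, l)" by fastforce
  have expand_B: "B (\<lambda>k' l'. X (i', k') (j', l')) k l
      = (\<Sum>k'\<in>UNIV. \<Sum>l'\<in>UNIV. X (i', k') (j', l') * B (unit_mat k' l') k l)" for i' j'
    by (rule lin_map_unit_mat_expansion[OF assms(2)])
  have expand_A: "A (\<lambda>i' j'. X (i', k') (j', l')) i j
      = (\<Sum>i'\<in>UNIV. \<Sum>j'\<in>UNIV. X (i', k') (j', l') * A (unit_mat i' j') i j)" for k' l'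
    by (rule lin_map_unit_mat_expansion[OF assms(1)])
  have "tensor_map A id (tensor_map id B X) (i, k) (j, l)
      = A (\<lambda>i' j'. B (\<lambda>k' l'. X (i', k') (j', l')) k l) i j"
    by (simp add: tensor_map_id_right_apply[OF assms(1)] tensor_map_id_left_apply[OF assms(2)])
  also have "\<dots> = (\<Sum>i'\<in>UNIV. \<Sum>j'\<in>UNIV. B (\<lambda>k' l'. X (i', k') (j', l')) k l * A (unit_mat i' j') i j)"
    by (rule lin_map_unit_mat_expansion[OF assms(1)])
  also have "\<dots> = (\<Sum>i'\<in>UNIV. \<Sum>j'\<in>UNIV. \<Sum>k'\<in>UNIV. \<Sum>l'\<in>UNIV.
      X (i', k') (j', l') * B (unit_mat k' l') k l * A (unit_mat i' j') i j)"
    unfolding expand_B by (simp only: sum_distrib_right)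
  also have "\<dots> = (\<Sum>k'\<in>UNIV. \<Sum>l'\<in>UNIV. \<Sum>i'\<in>UNIV. \<Sum>j'\<in>UNIV.
      X (i', k') (j', l') * B (unit_mat k' l') k l * A (unit_mat i' j') i j)"
    by (rule sum_swap_pairs)
  also have "\<dots> = (\<Sum>k'\<in>UNIV. \<Sum>l'\<in>UNIV. A (\<lambda>i' j'. X (i', k') (j', l')) i j * B (unit_mat k' l') k l)"
    unfolding expand_A sum_distrib_right by (simp only: mult_ac)
  also have "\<dots> = B (\<lambda>k' l'. A (\<lambda>i' j'. X (i', k') (j', l')) i j) k l"
    by (rule lin_map_unit_mat_expansion[OF assms(2), symmetric])
  also have "\<dots> = tensor_map id B (tensor_map A id X) (i, k) (j, l)"
    by (simp add: tensor_map_id_right_apply[OF assms(1)] tensor_map_id_left_apply[OF assms(2)])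
  finally show "tensor_map A id (tensor_map id B X) r s = tensor_map id B (tensor_map A id X) r s"
    using rs by simp
qed

subsection \<open>Positivity of block matrices over arbitrary finite index sets\<close>

definition quad_form :: "'i set \<Rightarrow> ('i \<Rightarrow> 'i \<Rightarrow> ('a::finite) sqmat) \<Rightarrow> ('i \<Rightarrow> 'a \<Rightarrow> complex) \<Rightarrow> complex" where
  "quad_form S X v = (\<Sum>p\<in>S. \<Sum>q\<in>S. \<Sum>i\<in>UNIV. \<Sum>j\<in>UNIV. cnj (v p i) * X p q i j * v q j)"

definition psd_on :: "'i set \<Rightarrow> ('i \<Rightarrow> 'i \<Rightarrow> ('a::finite) sqmat) \<Rightarrow> bool" where
  "psd_on S X \<longleftrightarrow> (\<forall>v. 0 \<le> quad_form S X v)"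

lemma psd_block_iff_psd_on: "psd_block k X \<longleftrightarrow> psd_on {..<k} X"
  unfolding psd_block_def psd_on_def quad_form_def Let_def less_eq_complex_def by auto

lemma quad_form_reindex:
  assumes "bij_betw h A S"
  shows "quad_form A (\<lambda>m m'. Z (h m) (h m')) (\<lambda>m. w (h m)) = quad_form S Z w"
proof -
  let ?F = "\<lambda>s t. \<Sum>i\<in>UNIV. \<Sum>j\<in>UNIV. cnj (w s i) * Z s t i j * w t j"
  have "quad_form A (\<lambda>m m'. Z (h m) (h m')) (\<lambda>m. w (h m)) = (\<Sum>m\<in>A. \<Sum>t\<in>S. ?F (h m) t)"
    unfolding quad_form_def by (intro sum.cong refl) (rule sum.reindex_bij_betw[OF assms])
  also have "\<dots> = quad_form S Z w"
    unfolding quad_form_def by (rule sum.reindex_bij_betw[OF assms])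
  finally show ?thesis .
qed

lemma psd_block_reindex:
  fixes Z :: "'s \<Rightarrow> 's \<Rightarrow> ('a::finite) sqmat"
  assumes bij: "bij_betw h {..<N} S"
  shows "psd_block N (\<lambda>m m'. Z (h m) (h m')) \<longleftrightarrow> psd_on S Z"
proof
  assume "psd_block N (\<lambda>m m'. Z (h m) (h m'))"
  then show "psd_on S Z"
    unfolding psd_block_iff_psd_on psd_on_def using quad_form_reindex[OF bij] by metis
next
  assume psd: "psd_on S Z"
  show "psd_block N (\<lambda>m m'. Z (h m) (h m'))"
    unfolding psd_block_iff_psd_on psd_on_def
  proof
    fix v :: "nat \<Rightarrow> 'a \<Rightarrow> complex"
    define w where "w = (\<lambda>s. v (inv_into {..<N} h s))"
    have "v m = w (h m)" if "m \<in> {..<N}" for m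
      unfolding w_def using bij that by (simp add: bij_betw_def)
    then have "quad_form {..<N} (\<lambda>m m'. Z (h m) (h m')) v
        = quad_form {..<N} (\<lambda>m m'. Z (h m) (h m')) (\<lambda>m. w (h m))"
      unfolding quad_form_def by (intro sum.cong refl) simp
    then show "0 \<le> quad_form {..<N} (\<lambda>m m'. Z (h m) (h m')) v"
      using quad_form_reindex[OF bij, of Z w] psd unfolding psd_on_def by simp
  qed
qed

lemma completely_positive_psd_on:
  assumes "completely_positive B" "finite S" "psd_on S Z"
  shows "psd_on S (\<lambda>s t. B (Z s t))"
proof -
  obtain h where "bij_betw h {0..<card S} S"
    using ex_bij_betw_nat_finite[OF assms(2)] by blast
  then have h: "bij_betw h {..<card S} S" by (simp add: atLeast0LessThan)
  have "psd_block (card S) (\<lambda>m m'. Z (h m) (h m'))"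
    using psd_block_reindex[OF h, of Z] assms(3) by simp
  then have "psd_block (card S) (\<lambda>m m'. B (Z (h m) (h m')))"
    using assms(1) unfolding completely_positive_def by blast
  then show ?thesis using psd_block_reindex[OF h, of "\<lambda>s t. B (Z s t)"] by simp
qed

text \<open>A block matrix with blocks in \<open>Lin(\<H>\<^sub>A \<otimes> \<H>\<^sub>B)\<close> is the same operator as the
  block matrix indexed by \<open>{..<k} \<times> A\<close> with blocks in \<open>Lin(\<H>\<^sub>B)\<close>.\<close>
lemma quad_form_regroup:
  fixes Y :: "nat \<Rightarrow> nat \<Rightarrow> (('a::finite) \<times> ('b::finite)) sqmat"
  shows "quad_form {..<k} Y v
    = quad_form ({..<k} \<times> UNIV) (\<lambda>(p, i) (q, j) k' l'. Y p q (i, k') (j, l')) (\<lambda>(p, i) k'. v p (i, k'))"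
proof -
  have "quad_form {..<k} Y v = (\<Sum>p<k. \<Sum>q<k. \<Sum>i\<in>UNIV. \<Sum>k'\<in>UNIV. \<Sum>j\<in>UNIV. \<Sum>l'\<in>UNIV.
          cnj (v p (i, k')) * Y p q (i, k') (j, l') * v q (j, l'))"
    unfolding quad_form_def by (simp add: sum_UNIV_prod)
  also have "\<dots> = (\<Sum>p<k. \<Sum>i\<in>UNIV. \<Sum>q<k. \<Sum>j\<in>UNIV. \<Sum>k'\<in>UNIV. \<Sum>l'\<in>UNIV.
          cnj (v p (i, k')) * Y p q (i, k') (j, l') * v q (j, l'))"
    by (intro sum.cong refl, subst sum.swap) (intro sum.cong refl, rule sum.swap)
  also have "\<dots> = quad_form ({..<k} \<times> UNIV) (\<lambda>(p, i) (q, j) k' l'. Y p q (i, k') (j, l'))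
          (\<lambda>(p, i) k'. v p (i, k'))"
    unfolding quad_form_def sum.cartesian_product' by simp
  finally show ?thesis .
qed

lemma lin_map_tensor_id:
  fixes B :: "('b::finite) sqmat \<Rightarrow> 'b sqmat"
  assumes "lin_map B"
  shows "lin_map (tensor_map (id :: ('a::finite) sqmat \<Rightarrow> 'a sqmat) B)"
  unfolding lin_map_def tensor_map_id_left[OF assms]
  by (simp add: lin_map_add[OF assms] lin_map_scale[OF assms])

lemma trace_preserving_tensor_id:
  fixes B :: "('b::finite) sqmat \<Rightarrow> 'b sqmat"
  assumes "lin_map B" "trace_preserving B"
  shows "trace_preserving (tensor_map (id :: ('a::finite) sqmat \<Rightarrow> 'a sqmat) B)"
  unfolding trace_preserving_def
proof
  fix X :: "('a \<times> 'b) sqmat"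
  have "mtrace (tensor_map id B X) = (\<Sum>i\<in>UNIV. mtrace (B (\<lambda>k' l'. X (i, k') (i, l'))))"
    unfolding tensor_map_id_left[OF assms(1)] mtrace_def by (simp add: sum_UNIV_prod)
  also have "\<dots> = (\<Sum>i\<in>UNIV. mtrace (\<lambda>k' l'. X (i, k') (i, l')))"
    using assms(2) unfolding trace_preserving_def by simp
  also have "\<dots> = mtrace X"
    unfolding mtrace_def by (simp add: sum_UNIV_prod)
  finally show "mtrace (tensor_map id B X) = mtrace X" .
qed

lemma completely_positive_tensor_id:
  fixes B :: "('b::finite) sqmat \<Rightarrow> 'b sqmat"
  assumes "lin_map B" "completely_positive B"
  shows "completely_positive (tensor_map (id :: ('a::finite) sqmat \<Rightarrow> 'a sqmat) B)"
  unfolding completely_positive_def psd_block_iff_psd_on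
proof (intro allI impI)
  fix k and X :: "nat \<Rightarrow> nat \<Rightarrow> ('a \<times> 'b) sqmat"
  assume X: "psd_on {..<k} X"
  define Z where "Z = (\<lambda>(p::nat, i::'a) (q, j) k' l'. X p q (i, k') (j, l'))"
  have "psd_on ({..<k} \<times> UNIV) Z"
    unfolding psd_on_def
  proof
    fix w :: "nat \<times> 'a \<Rightarrow> 'b \<Rightarrow> complex"
    have w: "(\<lambda>(p, i) k'. (\<lambda>p x. w (p, fst x) (snd x)) p (i, k')) = w" by auto
    have "quad_form {..<k} X (\<lambda>p x. w (p, fst x) (snd x)) = quad_form ({..<k} \<times> UNIV) Z w"
      unfolding Z_def quad_form_regroup[of k X] w ..
    moreover have "0 \<le> quad_form {..<k} X (\<lambda>p x. w (p, fst x) (snd x))"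
      using X unfolding psd_on_def by (rule spec)
    ultimately show "0 \<le> quad_form ({..<k} \<times> UNIV) Z w" by simp
  qed
  then have BZ: "psd_on ({..<k} \<times> UNIV) (\<lambda>s t. B (Z s t))"
    by (intro completely_positive_psd_on[OF assms(2)]) simp_all
  have Z: "(\<lambda>(p, i) (q, j) k' l'. tensor_map id B (X p q) (i, k') (j, l')) = (\<lambda>s t. B (Z s t))"
    unfolding Z_def by (intro ext) (auto simp: tensor_map_id_left_apply[OF assms(1)])
  show "psd_on {..<k} (\<lambda>p q. tensor_map id B (X p q))"
    using BZ unfolding psd_on_def quad_form_regroup[of k "\<lambda>p q. tensor_map id B (X p q)"] Z by blast
qed

lemma channel_tensor_id: "channel B \<Longrightarrow> channel (tensor_map id B)"
  unfolding channel_def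
  using lin_map_tensor_id trace_preserving_tensor_id completely_positive_tensor_id by blast

subsection \<open>Replacement channels\<close>

definition rank_one :: "real \<Rightarrow> ('a \<Rightarrow> complex) \<Rightarrow> 'a sqmat" where
  "rank_one c u = (\<lambda>i j. of_real c * u i * cnj (u j))"

definition replacement_map :: "('a::finite) sqmat \<Rightarrow> 'a sqmat \<Rightarrow> 'a sqmat" where
  "replacement_map \<rho> X = (\<lambda>i j. mtrace X * \<rho> i j)"

lemma mtrace_add: "mtrace (\<lambda>i j. X i j + Y i j) = mtrace X + mtrace Y"
  unfolding mtrace_def by (simp add: sum.distrib)

lemma mtrace_scale: "mtrace (\<lambda>i j. c * X i j) = c * mtrace X"
  unfolding mtrace_def by (simp add: sum_distrib_left)

lemma lin_map_replacement_map: "lin_map (replacement_map \<rho>)"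
  unfolding lin_map_def replacement_map_def by (simp add: mtrace_add mtrace_scale algebra_simps)

lemma trace_preserving_replacement_map: "mtrace \<rho> = 1 \<Longrightarrow> trace_preserving (replacement_map \<rho>)"
  unfolding trace_preserving_def replacement_map_def by (simp add: mtrace_scale)

lemma completely_positive_replacement_map:
  fixes u :: "('a::finite) \<Rightarrow> complex"
  assumes "c \<ge> 0"
  shows "completely_positive (replacement_map (rank_one c u))"
  unfolding completely_positive_def psd_block_iff_psd_on
proof (intro allI impI)
  fix k and X :: "nat \<Rightarrow> nat \<Rightarrow> 'a sqmat"
  assume X: "psd_on {..<k} X"
  show "psd_on {..<k} (\<lambda>p q. replacement_map (rank_one c u) (X p q))"
    unfolding psd_on_def
  proof
    fix v :: "nat \<Rightarrow> 'a \<Rightarrow> complex"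
    define d where "d = (\<lambda>p. \<Sum>j\<in>UNIV. cnj (u j) * v p j)"
    have cnj_d: "cnj (d p) = (\<Sum>i\<in>UNIV. cnj (v p i) * u i)" for p
      unfolding d_def by (simp add: mult.commute)
    txt \<open>Test vectors concentrated on a single basis vector \<open>l\<close>; summing their quadratic
      forms over \<open>l\<close> produces the traces of the blocks.\<close>
    define w :: "'a \<Rightarrow> nat \<Rightarrow> 'a \<Rightarrow> complex" where "w = (\<lambda>l p i. if i = l then d p else 0)"
    have quad_form_w: "quad_form {..<k} X (w l) = (\<Sum>p<k. \<Sum>q<k. cnj (d p) * X p q l l * d q)" for l
      unfolding quad_form_def w_def by (simp add: delta_simps)
    have "quad_form {..<k} (\<lambda>p q. replacement_map (rank_one c u) (X p q)) v
        = (\<Sum>p<k. \<Sum>q<k. of_real c * (cnj (d p) * mtrace (X p q) * d q))"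
      unfolding quad_form_def
    proof (intro sum.cong refl)
      fix p q
      have "of_real c * (cnj (d p) * mtrace (X p q) * d q)
          = of_real c * mtrace (X p q) * ((\<Sum>i\<in>UNIV. cnj (v p i) * u i) * (\<Sum>j\<in>UNIV. cnj (u j) * v q j))"
        by (simp add: cnj_d d_def mult_ac)
      also have "\<dots> = (\<Sum>i\<in>UNIV. \<Sum>j\<in>UNIV.
          of_real c * mtrace (X p q) * ((cnj (v p i) * u i) * (cnj (u j) * v q j)))"
        unfolding sum_product by (simp only: sum_distrib_left)
      also have "\<dots> = (\<Sum>i\<in>UNIV. \<Sum>j\<in>UNIV. cnj (v p i) * replacement_map (rank_one c u) (X p q) i j * v q j)"
        unfolding replacement_map_def rank_one_def by (intro sum.cong refl) (simp add: mult_ac)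
      finally show "(\<Sum>i\<in>UNIV. \<Sum>j\<in>UNIV. cnj (v p i) * replacement_map (rank_one c u) (X p q) i j * v q j)
          = of_real c * (cnj (d p) * mtrace (X p q) * d q)"
        by simp
    qed
    also have "\<dots> = of_real c * (\<Sum>l\<in>UNIV. quad_form {..<k} X (w l))"
      unfolding quad_form_w mtrace_def
      by (simp add: sum_distrib_left sum_distrib_right sum.swap[of _ UNIV] mult_ac)
    also have "0 \<le> \<dots>"
      using X assms unfolding psd_on_def
      by (intro mult_nonneg_nonneg sum_nonneg) (auto simp: less_eq_complex_def)
    finally show "0 \<le> quad_form {..<k} (\<lambda>p q. replacement_map (rank_one c u) (X p q)) v" .
  qed
qed

lemma channel_replacement_map:
  assumes "c \<ge> 0" "mtrace (rank_one c u) = 1"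
  shows "channel (replacement_map (rank_one c u))"
  unfolding channel_def
  using lin_map_replacement_map trace_preserving_replacement_map[OF assms(2)]
    completely_positive_replacement_map[OF assms(1)] by blast

definition partial_trace :: "(('a::finite) \<times> ('b::finite)) sqmat \<Rightarrow> 'b sqmat" where
  "partial_trace X = (\<lambda>k l. \<Sum>i\<in>UNIV. X (i, k) (i, l))"

lemma tensor_map_replacement_id: "tensor_map (replacement_map \<rho>) id X = kron \<rho> (partial_trace X)"
  unfolding tensor_map_id_right[OF lin_map_replacement_map]
  by (intro ext) (simp add: kron_def partial_trace_def replacement_map_def mtrace_def case_prod_beta mult.commute)

lemma kron_add_left: "kron (\<lambda>r s. M r s + N r s) Y = (\<lambda>r s. kron M Y r s + kron N Y r s)"
  unfolding kron_def by (intro ext) (simp add: case_prod_beta algebra_simps)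

lemma kron_scale_left: "kron (\<lambda>r s. c * M r s) Y = (\<lambda>r s. c * kron M Y r s)"
  unfolding kron_def by (intro ext) (simp add: case_prod_beta algebra_simps)

lemma kron_add_right: "kron Y (\<lambda>r s. M r s + N r s) = (\<lambda>r s. kron Y M r s + kron Y N r s)"
  unfolding kron_def by (intro ext) (simp add: case_prod_beta algebra_simps)

lemma kron_scale_right: "kron Y (\<lambda>r s. c * M r s) = (\<lambda>r s. c * kron Y M r s)"
  unfolding kron_def by (intro ext) (simp add: case_prod_beta algebra_simps)

lemma partial_trace_add: "partial_trace (\<lambda>r s. M r s + N r s) = (\<lambda>r s. partial_trace M r s + partial_trace N r s)"
  unfolding partial_trace_def by (simp add: sum.distrib)

lemma partial_trace_scale: "partial_trace (\<lambda>r s. c * M r s) = (\<lambda>r s. c * partial_trace M r s)"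
  unfolding partial_trace_def by (simp add: sum_distrib_left)

lemma partial_trace_kron: "partial_trace (kron M Y) = (\<lambda>k l. mtrace M * Y k l)"
  unfolding partial_trace_def kron_def mtrace_def by (simp add: sum_distrib_right)

lemma mtrace_partial_trace: "mtrace (partial_trace M) = mtrace M"
  unfolding partial_trace_def mtrace_def sum_UNIV_prod by (rule sum.swap)

lemma mtrace_kron: "mtrace (kron M Y) = mtrace M * mtrace Y"
  unfolding kron_def mtrace_def sum_UNIV_prod sum_product by simp

lemma mtrace_unit_mat_diag: "mtrace (unit_mat i (i::'a::finite)) = 1"
  unfolding mtrace_def unit_mat_def by simp

subsection \<open>Matrix units as combinations of pure states\<close>

definition basis_vec :: "'a \<Rightarrow> 'a \<Rightarrow> complex" where
  "basis_vec i = (\<lambda>x. if x = i then 1 else 0)"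

lemma unit_mat_diag_eq_rank_one: "unit_mat i i = rank_one 1 (basis_vec i)"
  unfolding unit_mat_def rank_one_def basis_vec_def by (intro ext) simp

lemma unit_mat_polarization:
  assumes "i \<noteq> j"
  shows "unit_mat i j = (\<lambda>r s. rank_one (1/2) (\<lambda>x. basis_vec i x + basis_vec j x) r s
      + \<i> * rank_one (1/2) (\<lambda>x. basis_vec i x + \<i> * basis_vec j x) r s
      + (-(1 + \<i>)/2) * (unit_mat i i r s + unit_mat j j r s))"
  using assms unfolding unit_mat_def rank_one_def basis_vec_def
  by (intro ext) (auto simp: field_simps)

lemma mtrace_rank_one: "mtrace (rank_one c u) = of_real c * (\<Sum>x\<in>UNIV. u x * cnj (u x))"
  unfolding mtrace_def rank_one_def by (simp add: sum_distrib_left mult_ac)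

lemma mtrace_rank_one_two_basis_vecs:
  assumes "i \<noteq> (j::'a::finite)" "a * cnj a = 1"
  shows "mtrace (rank_one (1/2) (\<lambda>x. basis_vec i x + a * basis_vec j x)) = 1"
proof -
  have "(basis_vec i x + a * basis_vec j x) * cnj (basis_vec i x + a * basis_vec j x)
      = basis_vec i x + basis_vec j x" for x
    unfolding basis_vec_def using assms by (cases "x = i"; cases "x = j") simp_all
  then show ?thesis
    unfolding mtrace_rank_one by (simp add: sum.distrib basis_vec_def)
qed

lemma commuting_with_replacement_id:
  assumes "C \<circ> tensor_map (replacement_map \<rho>) id = tensor_map (replacement_map \<rho>) id \<circ> C"
    and "mtrace E = 1"
  shows "C (kron \<rho> Y) = kron \<rho> (partial_trace (C (kron E Y)))"
proof -
  have "C (tensor_map (replacement_map \<rho>) id (kron E Y)) = tensor_map (replacement_map \<rho>) id (C (kron E Y))"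
    using assms(1) by (simp add: fun_eq_iff)
  then show ?thesis
    by (simp add: tensor_map_replacement_id partial_trace_kron assms(2))
qed

text \<open>The matrices \<open>M\<close> with \<open>C(M \<otimes> Y) = M \<otimes> \<B>(Y)\<close> form a subspace, and by polarization
  every matrix unit lies in the span of the pure states.\<close>
lemma kron_unit_mat_of_pure_states:
  assumes lin: "lin_map C"
    and pure: "\<And>c u Y. c \<ge> 0 \<Longrightarrow> mtrace (rank_one c u) = 1
      \<Longrightarrow> C (kron (rank_one c u) Y) = kron (rank_one c u) (B Y)"
  shows "C (kron (unit_mat i j) Y) = kron (unit_mat i j) (B Y)"
proof -
  let ?invariant = "\<lambda>M. C (kron M Y) = kron M (B Y)"
  have add: "?invariant (\<lambda>r s. M r s + N r s)" if "?invariant M" "?invariant N" for M N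
    using that by (simp add: kron_add_left lin_map_add[OF lin])
  have scale: "?invariant (\<lambda>r s. c * M r s)" if "?invariant M" for M c
    using that by (simp add: kron_scale_left lin_map_scale[OF lin])
  have diag: "?invariant (unit_mat l l)" for l
    using pure[of 1 "basis_vec l"] unfolding unit_mat_diag_eq_rank_one[symmetric]
    by (simp add: mtrace_unit_mat_diag)
  show ?thesis
  proof (cases "i = j")
    case True
    then show ?thesis using diag by simp
  next
    case False
    have P: "?invariant (rank_one (1/2) (\<lambda>x. basis_vec i x + basis_vec j x))"
      using pure mtrace_rank_one_two_basis_vecs[OF False, of 1] by simp
    have Q: "?invariant (rank_one (1/2) (\<lambda>x. basis_vec i x + \<i> * basis_vec j x))"
      using pure mtrace_rank_one_two_basis_vecs[OF False, of \<i>] by simp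
    show ?thesis
      unfolding unit_mat_polarization[OF False]
      by (intro add scale P Q diag)
  qed
qed

lemma lin_map_eq_tensor_id:
  assumes lin_C: "lin_map C" and lin_B: "lin_map B"
    and units: "\<And>i j Y. C (kron (unit_mat i j) Y) = kron (unit_mat i j) (B Y)"
  shows "C = tensor_map id B"
proof
  fix X :: "(('a::finite) \<times> ('b::finite)) sqmat"
  have "X = (\<lambda>r s. \<Sum>i\<in>UNIV. \<Sum>j\<in>UNIV. kron (unit_mat i j) (\<lambda>k l. X (i, k) (j, l)) r s)"
    by (intro ext) (simp add: kron_def unit_mat_def case_prod_beta delta_simps)
  then have "C X = C (\<lambda>r s. \<Sum>i\<in>UNIV. \<Sum>j\<in>UNIV. kron (unit_mat i j) (\<lambda>k l. X (i, k) (j, l)) r s)"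
    by (rule arg_cong)
  also have "\<dots> = (\<lambda>r s. \<Sum>i\<in>UNIV. \<Sum>j\<in>UNIV. C (kron (unit_mat i j) (\<lambda>k l. X (i, k) (j, l))) r s)"
    by (simp add: lin_map_sum[OF lin_C])
  also have "\<dots> = (\<lambda>r s. \<Sum>i\<in>UNIV. \<Sum>j\<in>UNIV. kron (unit_mat i j) (B (\<lambda>k l. X (i, k) (j, l))) r s)"
    by (simp add: units)
  also have "\<dots> = tensor_map id B X"
    by (intro ext) (simp add: tensor_map_id_left[OF lin_B] kron_def unit_mat_def case_prod_beta delta_simps)
  finally show "C X = tensor_map id B X" .
qed

lemma lin_map_partial_trace_kron_left:
  "lin_map C \<Longrightarrow> lin_map (\<lambda>Y. partial_trace (C (kron E Y)))"
  unfolding lin_map_def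
  by (simp add: kron_add_right kron_scale_right partial_trace_add partial_trace_scale)

lemma trace_preserving_partial_trace_kron_left:
  "trace_preserving C \<Longrightarrow> mtrace E = 1 \<Longrightarrow> trace_preserving (\<lambda>Y. partial_trace (C (kron E Y)))"
  unfolding trace_preserving_def by (simp add: mtrace_partial_trace mtrace_kron)

text \<open>Restriction of a completely positive map to the corner \<open>E\<^sub>a\<^sub>a \<otimes> Lin(\<H>\<^sub>B)\<close>: test vectors
  for \<open>\<B>\<close> become test vectors for \<open>C\<close> supported on \<open>e\<^sub>a \<otimes> \<H>\<^sub>B\<close>.\<close>
lemma completely_positive_corner:
  fixes C :: "(('a::finite) \<times> ('b::finite)) sqmat \<Rightarrow> ('a \<times> 'b) sqmat"
  assumes cp: "completely_positive C"
    and corner: "\<And>Y. C (kron (unit_mat a a) Y) = kron (unit_mat a a) (B Y)"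
  shows "completely_positive B"
  unfolding completely_positive_def psd_block_iff_psd_on psd_on_def
proof (intro allI impI)
  fix k and X :: "nat \<Rightarrow> nat \<Rightarrow> 'b sqmat" and w :: "nat \<Rightarrow> 'b \<Rightarrow> complex"
  assume X: "\<forall>v. 0 \<le> quad_form {..<k} X v"
  have quad_form_corner: "quad_form S (\<lambda>p q. kron (unit_mat a a) (M p q)) v = quad_form S M (\<lambda>p l. v p (a, l))"
    for S M and v :: "nat \<Rightarrow> 'a \<times> 'b \<Rightarrow> complex"
    unfolding quad_form_def kron_def unit_mat_def sum_UNIV_prod by (simp add: delta_simps)
  have "psd_on {..<k} (\<lambda>p q. kron (unit_mat a a) (X p q))"
    using X unfolding psd_on_def quad_form_corner by blast
  then have "psd_on {..<k} (\<lambda>p q. C (kron (unit_mat a a) (X p q)))"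
    using cp unfolding completely_positive_def psd_block_iff_psd_on by blast
  then have "psd_on {..<k} (\<lambda>p q. kron (unit_mat a a) (B (X p q)))"
    unfolding corner .
  then have "0 \<le> quad_form {..<k} (\<lambda>p q. kron (unit_mat a a) (B (X p q))) (\<lambda>p x. w p (snd x))"
    unfolding psd_on_def by blast
  then show "0 \<le> quad_form {..<k} (\<lambda>p q. B (X p q)) w"
    unfolding quad_form_corner by simp
qed

lemma tensor_id_of_commutant:
  fixes C :: "(('a::finite) \<times> ('b::finite)) sqmat \<Rightarrow> ('a \<times> 'b) sqmat"
  assumes "C \<in> commutant {tensor_map A (id :: 'b sqmat \<Rightarrow> 'b sqmat) | A. channel (A :: 'a sqmat \<Rightarrow> 'a sqmat)}"
  shows "\<exists>B. channel B \<and> C = tensor_map id B"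
proof -
  have C: "lin_map C" "completely_positive C" "trace_preserving C"
    and comm: "\<And>A. channel A \<Longrightarrow> C \<circ> tensor_map A id = tensor_map A id \<circ> C"
    using assms unfolding commutant_def channel_def by blast+
  fix a :: 'a
  define B where "B = (\<lambda>Y. partial_trace (C (kron (unit_mat a a) Y)))"
  have "C (kron (rank_one c u) Y) = kron (rank_one c u) (B Y)"
    if "c \<ge> 0" "mtrace (rank_one c u) = 1" for c u Y
    unfolding B_def
    by (intro commuting_with_replacement_id comm channel_replacement_map that mtrace_unit_mat_diag)
  then have units: "C (kron (unit_mat i j) Y) = kron (unit_mat i j) (B Y)" for i j Y
    by (intro kron_unit_mat_of_pure_states[OF C(1)])
  have "channel B"
    unfolding channel_def B_def
    using lin_map_partial_trace_kron_left[OF C(1)] completely_positive_corner[OF C(2) units[unfolded B_def]]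
      trace_preserving_partial_trace_kron_left[OF C(3) mtrace_unit_mat_diag]
    by blast
  moreover have "C = tensor_map id B"
    using lin_map_eq_tensor_id[OF C(1) _ units] \<open>channel B\<close> unfolding channel_def by blast
  ultimately show ?thesis by blast
qed

lemma tensor_id_mem_commutant:
  assumes "channel (B :: ('b::finite) sqmat \<Rightarrow> 'b sqmat)"
  shows "tensor_map id B \<in> commutant {tensor_map A id | A. channel (A :: ('a::finite) sqmat \<Rightarrow> 'a sqmat)}"
proof -
  have "tensor_map id B \<circ> tensor_map A id = tensor_map A id \<circ> tensor_map id B" if "channel A" for A
    using tensor_map_id_right_commute[of A B] that assms by (auto simp: channel_def)
  then show ?thesis
    unfolding commutant_def using channel_tensor_id[OF assms] by blast
qed

theorem mainTheorem2:
  shows "commutant {tensor_map A (id :: ('b::finite) sqmat \<Rightarrow> 'b sqmat) | A. channel (A :: ('a::finite) sqmat \<Rightarrow> 'a sqmat)}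
         = {tensor_map (id :: 'a sqmat \<Rightarrow> 'a sqmat) B | B. channel (B :: 'b sqmat \<Rightarrow> 'b sqmat)}"
  using tensor_id_of_commutant tensor_id_mem_commutant by blast

end
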